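(* Let $n\ge2$, $T_j>0$, and let $\vec w_j^*=\vec w_j^{(1,T_j)}$ be the winner-take-all prize structure, with $w^*_{j,1}=T_j$ and all other prizes $0$. Let $\vec w_j'$ be any prize structure with $w'_{j,1}\ge\dots\ge w'_{j,n}\ge0$ and $\sum_kw'_{j,k}\le T_j$. Then $x_{\vec w_j^*}$ single-crossing-dominates $x_{\vec w_j'}$.
   Context: Interim allocation function. For a prize structure $\vec w=(w_1,\dots,w_n)$, $x_{\vec w}(\phi):=\sum_{k=1}^n w_k\binom{n-1}{k-1}\phi^{k-1}(1-\phi)^{n-k}$ on $[0,1]$. In particular $x_{\vec w_j^*}(\phi)=T_j(1-\phi)^{n-1}$. Single-crossing. For functions $f,g$ on $[0,1]$, $f$ is single-crossing with respect to $g$ if there is $\phi_0\in[0,1]$ with $f\ge g$ on $[0,\phi_0)$ and $f\le g$ on $(\phi_0,1]$. Single-crossing dominance. An interim allocation function $x$ single-crossing-dominates $\tilde x$ if all of the following hold: 1. $\int_0^1x\ge\int_0^1\tilde x$; 2. $x$ is single-crossing with respect to $\tilde x$; 3. $-x'$ is single-crossing with respect to $-\tilde x'$. *)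

theory Defs
  imports "HOL-Analysis.Analysis"
begin

definition interim_alloc :: "nat \<Rightarrow> (nat \<Rightarrow> real) \<Rightarrow> real \<Rightarrow> real" where
  "interim_alloc n w \<phi> =
     (\<Sum>k=1..n. w k * real ((n - 1) choose (k - 1)) * \<phi> ^ (k - 1) * (1 - \<phi>) ^ (n - k))"

definition single_crossing :: "(real \<Rightarrow> real) \<Rightarrow> (real \<Rightarrow> real) \<Rightarrow> bool" where
  "single_crossing f g \<longleftrightarrow>
     (\<exists>\<phi>0\<in>{0..1}. (\<forall>\<phi>\<in>{0..<\<phi>0}. f \<phi> \<ge> g \<phi>) \<and> (\<forall>\<phi>\<in>{\<phi>0<..1}. f \<phi> \<le> g \<phi>))"

definition sc_dominates :: "(real \<Rightarrow> real) \<Rightarrow> (real \<Rightarrow> real) \<Rightarrow> bool" where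
  "sc_dominates x y \<longleftrightarrow>
     integral {0..1} x \<ge> integral {0..1} y \<and>
     single_crossing x y \<and>
     single_crossing (\<lambda>\<phi>. - deriv x \<phi>) (\<lambda>\<phi>. - deriv y \<phi>)"

definition wta :: "real \<Rightarrow> nat \<Rightarrow> real" where
  "wta T k = (if k = 1 then T else 0)"

end

(*
  In the Bernstein basis of degree n - 1, x_w has the coefficients w_1, ..., w_n.  Dividing by
  (1 - phi)^(n-1) turns the winner-take-all allocation T (1 - phi)^(n-1) into the constant T and
  any x_c with nonnegative prizes into a polynomial with nonnegative coefficients in the odds
  phi / (1 - phi), which is nondecreasing on [0, 1).  So once x_c exceeds the winner-take-all
  allocation it stays above: single crossing.

  Differentiating the Bernstein basis shows that -x_w' is again an interim allocation, of degree
  n - 2, with prizes (n - 1) (w_k - w_(k+1)).  These are nonnegative for decreasing w, and for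
  winner-take-all they form winner-take-all with total (n - 1) T, so the same argument applies.
  Finally x_w is the derivative of the allocation with partial-sum prizes, which gives the
  integral (w_1 + ... + w_n) / n.
*)
theory Submission
  imports Defs
begin

lemma Bernstein_eq_0: "n < k \<Longrightarrow> Bernstein n k x = 0"
  by (simp add: Bernstein_def)

lemma Bernstein_at_0: "Bernstein n k 0 = (if k = 0 then 1 else 0)"
  by (simp add: Bernstein_def)

lemma Bernstein_at_1: "Bernstein n k 1 = (if k = n then 1 else 0)"
  by (auto simp: Bernstein_def)

lemma has_real_derivative_Bernstein_0:
  "((\<lambda>x. Bernstein (Suc n) 0 x) has_real_derivative - real (Suc n) * Bernstein n 0 x) (at x)"
  unfolding Bernstein_def
  by (rule derivative_eq_intros refl)+ (cases n, auto simp: algebra_simps)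

lemma has_real_derivative_Bernstein_Suc:
  "((\<lambda>x. Bernstein (Suc n) (Suc k) x) has_real_derivative
     real (Suc n) * (Bernstein n k x - Bernstein n (Suc k) x)) (at x)"
proof -
  define c where "c = real (Suc n choose Suc k)"
  have c_Suc: "c * real (Suc k) = real (Suc n) * real (n choose k)"
    using Suc_times_binomial_eq[of n k] unfolding c_def by (metis of_nat_mult)
  have c_diff: "c * real (n - k) = real (Suc n) * real (n choose Suc k)"
    using binomial_absorb_comp[of "Suc n" "Suc k"] unfolding c_def
    by (metis diff_Suc_1 diff_Suc_Suc mult.commute of_nat_mult)
  have "((\<lambda>x. Bernstein (Suc n) (Suc k) x) has_real_derivative
      c * (real (Suc k) * x ^ k * (1 - x) ^ (n - k) - real (n - k) * x ^ Suc k * (1 - x) ^ (n - Suc k))) (at x)"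
    unfolding Bernstein_def c_def
    by (rule derivative_eq_intros refl)+ (simp add: algebra_simps)
  also have "c * (real (Suc k) * x ^ k * (1 - x) ^ (n - k) - real (n - k) * x ^ Suc k * (1 - x) ^ (n - Suc k))
      = (c * real (Suc k)) * (x ^ k * (1 - x) ^ (n - k))
        - (c * real (n - k)) * (x ^ Suc k * (1 - x) ^ (n - Suc k))"
    by (simp only: right_diff_distrib mult.assoc)
  also have "\<dots> = real (Suc n) * (Bernstein n k x - Bernstein n (Suc k) x)"
    unfolding c_Suc c_diff Bernstein_def by (simp only: right_diff_distrib mult_ac)
  finally show ?thesis .
qed

lemma interim_alloc_Suc_eq_Bernstein:
  "interim_alloc (Suc n) w x = (\<Sum>j\<le>n. w (Suc j) * Bernstein n j x)"
proof -
  have "interim_alloc (Suc n) w x =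
      (\<Sum>k=Suc 0..Suc n. w k * real (n choose (k - 1)) * x ^ (k - 1) * (1 - x) ^ (Suc n - k))"
    by (simp add: interim_alloc_def)
  also have "\<dots> = (\<Sum>j=0..n. w (Suc j) * real (n choose j) * x ^ j * (1 - x) ^ (n - j))"
    by (subst sum.shift_bounds_cl_Suc_ivl) simp
  finally show ?thesis
    by (simp add: Bernstein_def atMost_atLeast0 mult.assoc)
qed

lemma interim_alloc_0 [simp]: "interim_alloc 0 w = (\<lambda>_. 0)"
  by (simp add: fun_eq_iff interim_alloc_def)

lemma interim_alloc_cong:
  "(\<And>k. 1 \<le> k \<Longrightarrow> k \<le> n \<Longrightarrow> w k = v k) \<Longrightarrow> interim_alloc n w = interim_alloc n v"
  by (simp add: fun_eq_iff interim_alloc_def)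

lemma interim_alloc_cmult: "c * interim_alloc n w x = interim_alloc n (\<lambda>k. c * w k) x"
  by (simp add: interim_alloc_def sum_distrib_left mult.assoc)

lemma interim_alloc_at_0: "interim_alloc (Suc n) w 0 = w 1"
  by (simp add: interim_alloc_Suc_eq_Bernstein Bernstein_at_0 if_distrib[of "(*) _"] sum.delta cong: if_cong)

lemma interim_alloc_at_1: "interim_alloc (Suc n) w 1 = w (Suc n)"
  by (simp add: interim_alloc_Suc_eq_Bernstein Bernstein_at_1 if_distrib[of "(*) _"] sum.delta cong: if_cong)

lemma has_real_derivative_interim_alloc:
  "(interim_alloc (Suc n) w has_real_derivative
     real n * interim_alloc n (\<lambda>k. w (Suc k) - w k) x) (at x)"
proof (cases n)
  case 0
  have "interim_alloc (Suc 0) w = (\<lambda>_. w 1)"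
    by (simp add: fun_eq_iff interim_alloc_Suc_eq_Bernstein Bernstein_def)
  with 0 show ?thesis by simp
next
  case (Suc p)
  let ?B = "Bernstein p"
  have expand: "interim_alloc (Suc (Suc p)) w =
      (\<lambda>x. w 1 * Bernstein (Suc p) 0 x + (\<Sum>j\<le>p. w (Suc (Suc j)) * Bernstein (Suc p) (Suc j) x))"
    by (simp add: fun_eq_iff interim_alloc_Suc_eq_Bernstein sum.atMost_Suc_shift del: sum.atMost_Suc)
  have shift: "w 1 * ?B 0 x + (\<Sum>j\<le>p. w (Suc (Suc j)) * ?B (Suc j) x) = (\<Sum>j\<le>p. w (Suc j) * ?B j x)"
  proof -
    have "w 1 * ?B 0 x + (\<Sum>j\<le>p. w (Suc (Suc j)) * ?B (Suc j) x) = (\<Sum>j\<le>Suc p. w (Suc j) * ?B j x)"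
      by (subst sum.atMost_Suc_shift) simp
    also have "\<dots> = (\<Sum>j\<le>p. w (Suc j) * ?B j x)"
      by (simp add: Bernstein_eq_0)
    finally show ?thesis .
  qed
  have "(interim_alloc (Suc (Suc p)) w has_real_derivative
      w 1 * (- real (Suc p) * ?B 0 x)
        + (\<Sum>j\<le>p. w (Suc (Suc j)) * (real (Suc p) * (?B j x - ?B (Suc j) x)))) (at x)"
    unfolding expand
    by (intro DERIV_add DERIV_sum DERIV_cmult has_real_derivative_Bernstein_0 has_real_derivative_Bernstein_Suc)
  also have "w 1 * (- real (Suc p) * ?B 0 x)
        + (\<Sum>j\<le>p. w (Suc (Suc j)) * (real (Suc p) * (?B j x - ?B (Suc j) x)))
      = real (Suc p) * ((\<Sum>j\<le>p. w (Suc (Suc j)) * ?B j x)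
          - (w 1 * ?B 0 x + (\<Sum>j\<le>p. w (Suc (Suc j)) * ?B (Suc j) x)))"
    by (simp add: sum_distrib_left sum_subtractf algebra_simps)
  also have "\<dots> = real (Suc p) *
      ((\<Sum>j\<le>p. w (Suc (Suc j)) * ?B j x) - (\<Sum>j\<le>p. w (Suc j) * ?B j x))"
    by (simp only: shift)
  also have "\<dots> = real n * interim_alloc n (\<lambda>k. w (Suc k) - w k) x"
    by (simp add: Suc interim_alloc_Suc_eq_Bernstein sum_subtractf algebra_simps)
  finally show ?thesis
    by (simp only: Suc)
qed

lemma neg_deriv_interim_alloc:
  "(\<lambda>x. - deriv (interim_alloc (Suc n) w) x) = interim_alloc n (\<lambda>k. real n * (w k - w (Suc k)))"
proof
  fix x
  have "- deriv (interim_alloc (Suc n) w) x = - (real n * interim_alloc n (\<lambda>k. w (Suc k) - w k) x)"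
    using DERIV_imp_deriv[OF has_real_derivative_interim_alloc] by simp
  also have "\<dots> = interim_alloc n (\<lambda>k. - real n * (w (Suc k) - w k)) x"
    using interim_alloc_cmult[of "- real n" n "\<lambda>k. w (Suc k) - w k" x] by simp
  also have "\<dots> = interim_alloc n (\<lambda>k. real n * (w k - w (Suc k))) x"
    by (simp add: algebra_simps)
  finally show "- deriv (interim_alloc (Suc n) w) x = interim_alloc n (\<lambda>k. real n * (w k - w (Suc k))) x" .
qed

lemma has_integral_interim_alloc:
  "(interim_alloc n w has_integral (\<Sum>k=1..n. w k) / real n) {0..1}"
proof (cases n)
  case 0
  then show ?thesis by simp
next
  case (Suc p)
  define v where "v k = (\<Sum>i=1..<k. w i) / real n" for k
  have "interim_alloc n (\<lambda>k. real n * (v (Suc k) - v k)) = interim_alloc n w"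
    by (rule interim_alloc_cong) (simp add: Suc v_def diff_divide_distrib[symmetric])
  then have antideriv: "(interim_alloc (Suc n) v has_real_derivative interim_alloc n w x) (at x)" for x
    using has_real_derivative_interim_alloc[of n v x] by (simp add: interim_alloc_cmult)
  have "(interim_alloc n w has_integral interim_alloc (Suc n) v 1 - interim_alloc (Suc n) v 0) {0..1}"
    by (rule fundamental_theorem_of_calculus)
      (auto simp: has_real_derivative_iff_has_vector_derivative[symmetric] intro: DERIV_subset[OF antideriv])
  then show ?thesis
    by (simp add: interim_alloc_at_0 interim_alloc_at_1 v_def atLeastLessThanSuc_atLeastAtMost)
qed

lemma interim_alloc_wta: "interim_alloc (Suc n) (wta S) x = S * (1 - x) ^ n"
  by (cases n)
    (simp_all add: interim_alloc_Suc_eq_Bernstein wta_def Bernstein_def sum.atMost_Suc_shift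
      del: sum.atMost_Suc)

lemma sum_wta: "1 \<le> n \<Longrightarrow> (\<Sum>k=1..n. wta T k) = T"
  by (simp add: wta_def)

lemma neg_deriv_interim_alloc_wta:
  "(\<lambda>x. - deriv (interim_alloc (Suc n) (wta T)) x) = interim_alloc n (wta (real n * T))"
  unfolding neg_deriv_interim_alloc by (rule interim_alloc_cong) (simp add: wta_def)

lemma single_crossingI:
  assumes "\<And>a b. 0 \<le> a \<Longrightarrow> a < b \<Longrightarrow> b \<le> 1 \<Longrightarrow> f a < g a \<Longrightarrow> f b \<le> g b"
  shows "single_crossing f g"
proof -
  \<comment> \<open>The crossing point is the infimum of A; the element 1 keeps A nonempty.\<close>
  define A where "A = insert 1 {a\<in>{0..1}. f a < g a}"
  have bdd: "bdd_below A"
    unfolding A_def by (rule bdd_belowI[of _ 0]) auto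
  have ne: "A \<noteq> {}"
    unfolding A_def by blast
  have ge0: "0 \<le> Inf A"
    using ne by (rule cInf_greatest) (auto simp: A_def)
  have le1: "Inf A \<le> 1"
    using bdd by (rule cInf_lower[rotated]) (simp add: A_def)
  have below: "g x \<le> f x" if "x \<in> {0..<Inf A}" for x
  proof (rule ccontr)
    assume "\<not> g x \<le> f x"
    with that le1 have "x \<in> A"
      by (auto simp: A_def)
    with that show False
      using cInf_lower[OF _ bdd, of x] by auto
  qed
  have above: "f x \<le> g x" if x: "x \<in> {Inf A<..1}" for x
  proof -
    obtain a where a: "a \<in> A" "a < x"
      using x cInf_less_iff[OF ne bdd, of x] by auto
    have "a \<noteq> 1"
      using a x by auto
    with a(1) have "0 \<le> a" "f a < g a"
      unfolding A_def by auto
    then show ?thesis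
      using assms[of a x] a(2) x by simp
  qed
  show ?thesis
    unfolding single_crossing_def using ge0 le1 below above by (intro bexI[of _ "Inf A"]) auto
qed

lemma interim_alloc_Suc_eq_odds:
  assumes "x < 1"
  shows "interim_alloc (Suc n) w x = (1 - x) ^ n * (\<Sum>j\<le>n. w (Suc j) * real (n choose j) * (x / (1 - x)) ^ j)"
  unfolding interim_alloc_Suc_eq_Bernstein sum_distrib_left
proof (rule sum.cong[OF refl])
  fix j assume "j \<in> {..n}"
  then have "(1 - x) ^ n = (1 - x) ^ j * (1 - x) ^ (n - j)"
    by (simp flip: power_add)
  then show "w (Suc j) * Bernstein n j x = (1 - x) ^ n * (w (Suc j) * real (n choose j) * (x / (1 - x)) ^ j)"
    using assms by (simp add: Bernstein_def power_divide field_simps)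
qed

lemma single_crossing_wta:
  assumes nonneg: "\<And>k. 1 \<le> k \<Longrightarrow> k \<le> n \<Longrightarrow> 0 \<le> c k"
  shows "single_crossing (interim_alloc n (wta S)) (interim_alloc n c)"
proof (rule single_crossingI)
  fix a b :: real
  assume ab: "0 \<le> a" "a < b" "b \<le> 1"
    and less: "interim_alloc n (wta S) a < interim_alloc n c a"
  then obtain q where n: "n = Suc q"
    by (cases n) auto
  define R where "R x = (\<Sum>j\<le>q. c (Suc j) * real (q choose j) * (x / (1 - x)) ^ j)" for x
  have "(1 - a) ^ q * S < (1 - a) ^ q * R a"
    using less ab by (simp add: n R_def interim_alloc_wta interim_alloc_Suc_eq_odds mult.commute)
  then have S_less: "S < R a"
    using ab by (simp add: mult_less_cancel_left_pos)
  show "interim_alloc n (wta S) b \<le> interim_alloc n c b"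
  proof (cases "b < 1")
    case True
    have "a / (1 - a) \<le> b / (1 - b)"
      using ab True by (intro frac_le) auto
    then have "R a \<le> R b"
      unfolding R_def using ab nonneg
      by (intro sum_mono mult_left_mono power_mono) (auto simp: n)
    then have "S * (1 - b) ^ q \<le> R b * (1 - b) ^ q"
      using S_less True by (intro mult_right_mono) auto
    with True show ?thesis
      by (simp add: n R_def interim_alloc_wta interim_alloc_Suc_eq_odds mult.commute)
  next
    case False
    then have "b = 1"
      using ab by simp
    show ?thesis
    proof (cases q)
      case 0
      then show ?thesis
        using S_less \<open>b = 1\<close> by (simp add: n R_def interim_alloc_at_1 wta_def)
    next
      case (Suc r)
      then show ?thesis
        using nonneg[of n] \<open>b = 1\<close> by (simp add: n interim_alloc_at_1 wta_def)
    qed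
  qed
qed

lemma nonneg_if_antitone:
  fixes w :: "nat \<Rightarrow> real"
  assumes "\<And>k. 1 \<le> k \<Longrightarrow> k < n \<Longrightarrow> w (k + 1) \<le> w k" and "0 \<le> w n"
    and "1 \<le> k" and "k \<le> n"
  shows "0 \<le> w k"
  using assms(4,3)
proof (induction k rule: inc_induct)
  case base
  then show ?case using assms(2) by simp
next
  case (step k)
  then show ?case using assms(1)[of k] by simp
qed

theorem mainTheorem8:
  fixes n :: nat and T :: real and w' :: "nat \<Rightarrow> real"
  assumes "n \<ge> 2" and "T > 0"
    and "\<And>k. 1 \<le> k \<Longrightarrow> k < n \<Longrightarrow> w' k \<ge> w' (k + 1)"
    and "w' n \<ge> 0"
    and "(\<Sum>k=1..n. w' k) \<le> T"
  shows "sc_dominates (interim_alloc n (wta T)) (interim_alloc n w')"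
proof -
  obtain m where n: "n = Suc m"
    using assms(1) by (cases n) auto
  have "(\<Sum>k=1..n. wta T k) = T"
    by (rule sum_wta) (simp add: n)
  with assms(5) have "(\<Sum>k=1..n. w' k) \<le> (\<Sum>k=1..n. wta T k)"
    by simp
  then have integral: "integral {0..1} (interim_alloc n w') \<le> integral {0..1} (interim_alloc n (wta T))"
    by (simp add: integral_unique[OF has_integral_interim_alloc] divide_right_mono)
  have crossing: "single_crossing (interim_alloc n (wta T)) (interim_alloc n w')"
    by (rule single_crossing_wta, rule nonneg_if_antitone[of n w']) (use assms(3,4) in auto)
  have "0 \<le> real m * (w' k - w' (Suc k))" if "1 \<le> k" "k \<le> m" for k
    using assms(3)[of k] that by (simp add: n)
  then have "single_crossing (interim_alloc m (wta (real m * T)))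
      (interim_alloc m (\<lambda>k. real m * (w' k - w' (Suc k))))"
    by (rule single_crossing_wta)
  then have deriv_crossing:
    "single_crossing (\<lambda>x. - deriv (interim_alloc n (wta T)) x) (\<lambda>x. - deriv (interim_alloc n w') x)"
    unfolding n neg_deriv_interim_alloc_wta by (simp only: neg_deriv_interim_alloc)
  show ?thesis
    unfolding sc_dominates_def using integral crossing deriv_crossing by blast
qed

end
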